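(* There is an absolute constant $c>0$ such that for every $A\ge 1$ there exist a weight $w$ on $[0,1]$ with $[w]_{2,\mathrm{cl}}=A$, a non-homogeneous dyadic filtration $\mathcal D$ of $[0,1]$, and a function $f\in L^2(w)$ such that $$\|f\|_{L^2(w)}\ge c\,A\,\|Sf\|_{L^2(w)}=c\,[w]_{2,\mathrm{cl}}\,\|Sf\|_{L^2(w)}.$$
   Context: $[0,1]$ carries Lebesgue measure, $|I|$ denotes length and $\langle f\rangle_I=|I|^{-1}\int_I f$. A non-homogeneous dyadic filtration of $[0,1]$ is an atomic filtration $\mathcal D=\bigcup_{n\ge0}\mathcal D_n$, $\mathcal D_0=\{[0,1]\}$, where each $\mathcal D_n$ is a finite partition of $[0,1]$ into intervals of positive length and each interval $I\in\mathcal D_n$ is split into exactly two subintervals (its children $\mathrm{ch}(I)$, belonging to $\mathcal D_{n+1}$) of possibly unequal lengths. Martingale differences: $\Delta_I f=\sum_{I'\in\mathrm{ch}(I)}\langle f\rangle_{I'}\mathbf 1_{I'}-\langle f\rangle_I\mathbf 1_I$; square function $Sf=\big(\sum_{I\in\mathcal D}(\Delta_If)^2\big)^{1/2}$. A weight is an integrable function $w>0$ a.e.; $\|f\|_{L^2(w)}^2=\int_0^1|f|^2w$. Classical $A_2$ characteristic: $[w]_{2,\mathrm{cl}}=\sup_{I\subseteq[0,1]}\langle w\rangle_I\langle w^{-1}\rangle_I$, the supremum over all subintervals $I$ of $[0,1]$. *)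

theory Defs
  imports "HOL-Analysis.Analysis"
begin

definition avg :: "(real \<Rightarrow> real) \<Rightarrow> real set \<Rightarrow> real" where
  "avg f I = (LINT x:I|lborel. f x) / measure lborel I"

definition children :: "(nat \<Rightarrow> real set set) \<Rightarrow> nat \<Rightarrow> real set \<Rightarrow> real set set" where
  "children D n I = {J \<in> D (Suc n). J \<subseteq> I}"

definition nh_dyadic_filtration :: "(nat \<Rightarrow> real set set) \<Rightarrow> bool" where
  "nh_dyadic_filtration D \<longleftrightarrow>
     D 0 = {{0..1}} \<and>
     (\<forall>n. \<forall>I\<in>D n. \<exists>a m b. a < m \<and> m < b \<and> I = {a..b} \<and>
                                children D n I = {{a..m}, {m..b}}) \<and>
     (\<forall>n. \<forall>J\<in>D (Suc n). \<exists>I\<in>D n. J \<subseteq> I)"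

definition mdiff :: "(nat \<Rightarrow> real set set) \<Rightarrow> nat \<Rightarrow> real set \<Rightarrow> (real \<Rightarrow> real) \<Rightarrow> real \<Rightarrow> real" where
  "mdiff D n I f x =
     (\<Sum>J\<in>children D n I. avg f J * indicator J x) - avg f I * indicator I x"

definition cond_exp_n :: "(nat \<Rightarrow> real set set) \<Rightarrow> nat \<Rightarrow> (real \<Rightarrow> real) \<Rightarrow> real \<Rightarrow> real" where
  "cond_exp_n D n f x = (\<Sum>I\<in>D n. avg f I * indicator I x)"

definition sqfun_sq :: "(nat \<Rightarrow> real set set) \<Rightarrow> (real \<Rightarrow> real) \<Rightarrow> real \<Rightarrow> ennreal" where
  "sqfun_sq D f x = (\<Sum>n. ennreal (\<Sum>I\<in>D n. (mdiff D n I f x)\<^sup>2))"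

definition is_weight :: "(real \<Rightarrow> real) \<Rightarrow> bool" where
  "is_weight w \<longleftrightarrow> w \<in> borel_measurable lborel \<and> set_integrable lborel {0..1} w \<and>
     (AE x in lborel. x \<in> {0..1} \<longrightarrow> w x > 0)"

text \<open>Finiteness requires w^{-1} integrable on [0,1]; if it is not, the
  characteristic is \<infinity> by convention.\<close>
definition A2_cl :: "(real \<Rightarrow> real) \<Rightarrow> ereal" where
  "A2_cl w = (if set_integrable lborel {0..1} (\<lambda>x. 1 / w x)
     then (SUP p \<in> {(a,b). 0 \<le> a \<and> a < b \<and> b \<le> (1::real)}.
             ereal (avg w {fst p..snd p} * avg (\<lambda>x. 1 / w x) {fst p..snd p}))
     else \<infinity>)"

definition L2w_sq :: "(real \<Rightarrow> real) \<Rightarrow> (real \<Rightarrow> real) \<Rightarrow> ennreal" where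
  "L2w_sq w f = (\<integral>\<^sup>+ x\<in>{0..1}. ennreal ((f x)\<^sup>2 * w x) \<partial>lborel)"

definition Sf_L2w_sq :: "(real \<Rightarrow> real) \<Rightarrow> (nat \<Rightarrow> real set set) \<Rightarrow> (real \<Rightarrow> real) \<Rightarrow> ennreal" where
  "Sf_L2w_sq w D f = (\<integral>\<^sup>+ x\<in>{0..1}. sqfun_sq D f x * ennreal (w x) \<partial>lborel)"

end

theory Submission
  imports Defs
begin

text \<open>The power weight x^-\<alpha> has A_2 characteristic 1/(1-\<alpha>^2), attained on the intervals
  [0,b]. Split the interval with left endpoint 0 at the fraction \<rho> of its length, bisect all
  other intervals, and let f be constant on each layer (\<rho>^(n+1),\<rho>^n] with average min n K
  over [0,\<rho>^n].
  Then only the chain intervals [0,\<rho>^n] carry martingale differences of f, at each point at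
  most K of them equal to 1 and one equal to -\<rho>/(1-\<rho>), so (Sf)^2 \<le> K + (\<rho>/(1-\<rho>))^2,
  whereas f = K on [0,\<rho>^K]. With \<rho> = (1+\<alpha>)/2 and K \<approx> (1-\<alpha>)^-2 \<approx> A^2 the weight
  gives [0,\<rho>^K] a fixed fraction of its total mass, so the ratio of the squared norms of f
  and Sf is of order K \<approx> A^2.\<close>

section \<open>Power weights\<close>

lemma has_integral_powr_Icc:
  fixes p a b :: real
  assumes p: "p > -1" and ab: "0 \<le> a" "a \<le> b"
  shows "((\<lambda>x. x powr p) has_integral (b powr (p+1) - a powr (p+1)) / (p+1)) {a..b}"
proof -
  have ia: "((\<lambda>x. x powr p) has_integral a powr (p+1) / (p+1)) {0..a}"
    and ib: "((\<lambda>x. x powr p) has_integral b powr (p+1) / (p+1)) {0..b}"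
    using has_integral_powr_from_0[OF p] ab by auto
  have "(\<lambda>x. x powr p) integrable_on {a..b}"
    by (rule integrable_subinterval_real[OF has_integral_integrable[OF ib]]) (use ab in auto)
  then have iab: "((\<lambda>x. x powr p) has_integral integral {a..b} (\<lambda>x. x powr p)) {a..b}"
    by (rule integrable_integral)
  have "a powr (p+1) / (p+1) + integral {a..b} (\<lambda>x. x powr p) = b powr (p+1) / (p+1)"
    using has_integral_combine[OF ab ia iab] ib by (rule has_integral_unique)
  then have "integral {a..b} (\<lambda>x. x powr p) = (b powr (p+1) - a powr (p+1)) / (p+1)"
    by (simp add: diff_divide_distrib)
  with iab show ?thesis by simp
qed

lemma set_integrable_powr_Icc:
  fixes p a b :: real
  assumes "p > -1" "0 \<le> a" "a \<le> b"
  shows "set_integrable lborel {a..b} (\<lambda>x. x powr p)"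
proof -
  have "(\<lambda>x. x powr p) absolutely_integrable_on {a..b}"
    using has_integral_powr_Icc[OF assms]
    by (intro nonnegative_absolutely_integrable_1) (auto simp: integrable_on_def)
  then show ?thesis
    unfolding set_integrable_def by (subst integrable_completion[symmetric]) auto
qed

lemma set_integral_powr_Icc:
  fixes p a b :: real
  assumes "p > -1" "0 \<le> a" "a \<le> b"
  shows "(LINT x:{a..b}|lborel. x powr p) = (b powr (p+1) - a powr (p+1)) / (p+1)"
  using set_borel_integral_eq_integral(2)[OF set_integrable_powr_Icc[OF assms]]
    has_integral_powr_Icc[OF assms] by (simp add: integral_unique)

lemma nn_integral_powr_Icc:
  fixes p a b :: real
  assumes "p > -1" "0 \<le> a" "a \<le> b"
  shows "(\<integral>\<^sup>+x\<in>{a..b}. ennreal (x powr p) \<partial>lborel) = ennreal ((b powr (p+1) - a powr (p+1)) / (p+1))"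
  by (rule nn_integral_has_integral_lebesgue'[OF _ has_integral_powr_Icc[OF assms]]) simp

lemma powr_mult_conjugate_powr:
  fixes x \<alpha> :: real
  assumes "0 \<le> x"
  shows "x powr (1 - \<alpha>) * x powr (1 + \<alpha>) = x\<^sup>2"
  using assms by (cases "x = 0") (simp_all add: powr_add[symmetric] powr_numeral)

lemma powr_conjugate_increments_le:
  fixes a b \<alpha> :: real
  assumes "0 \<le> a" "0 \<le> b"
  shows "(b powr (1-\<alpha>) - a powr (1-\<alpha>)) * (b powr (1+\<alpha>) - a powr (1+\<alpha>)) \<le> (b - a)\<^sup>2"
proof -
  define u where "u = b powr (1-\<alpha>) * a powr (1+\<alpha>)"
  define v where "v = a powr (1-\<alpha>) * b powr (1+\<alpha>)"
  have "u * v = (a * b)\<^sup>2"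
    using powr_mult_conjugate_powr[of a \<alpha>] powr_mult_conjugate_powr[of b \<alpha>] assms
    unfolding u_def v_def by (simp add: power_mult_distrib ac_simps)
  then have "2 * (a * b) \<le> u + v"
    using arith_geo_mean_sqrt[of u v] assms by (simp add: u_def v_def)
  moreover have "(b powr (1-\<alpha>) - a powr (1-\<alpha>)) * (b powr (1+\<alpha>) - a powr (1+\<alpha>)) = b\<^sup>2 + a\<^sup>2 - (u + v)"
  proof -
    have "(b powr (1-\<alpha>) - a powr (1-\<alpha>)) * (b powr (1+\<alpha>) - a powr (1+\<alpha>))
        = b powr (1-\<alpha>) * b powr (1+\<alpha>) + a powr (1-\<alpha>) * a powr (1+\<alpha>) - (u + v)"
      unfolding u_def v_def by (simp add: algebra_simps)
    then show ?thesis using powr_mult_conjugate_powr assms by simp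
  qed
  ultimately show ?thesis
    by (simp add: power2_diff mult.commute)
qed

definition power_weight :: "real \<Rightarrow> real \<Rightarrow> real" where
  "power_weight \<alpha> x = x powr (-\<alpha>)"

lemma inverse_power_weight: "1 / power_weight \<alpha> x = x powr \<alpha>"
  by (simp add: power_weight_def powr_minus divide_inverse)

lemma power_weight_nonneg: "0 \<le> power_weight \<alpha> x"
  by (simp add: power_weight_def)

lemma power_weight_measurable [measurable]: "power_weight \<alpha> \<in> borel_measurable borel"
  unfolding power_weight_def by measurable

lemma is_weight_power_weight:
  assumes "\<alpha> < 1"
  shows "is_weight (power_weight \<alpha>)"
  unfolding is_weight_def
proof (intro conjI)
  show "set_integrable lborel {0..1} (power_weight \<alpha>)"
    unfolding power_weight_def using set_integrable_powr_Icc[of "-\<alpha>" 0 1] assms by simp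
  show "AE x in lborel. x \<in> {0..1} \<longrightarrow> 0 < power_weight \<alpha> x"
    using AE_lborel_singleton[of 0] by eventually_elim (auto simp: power_weight_def)
qed simp

lemma nn_integral_power_weight:
  assumes "\<alpha> < 1" "0 \<le> s"
  shows "(\<integral>\<^sup>+x\<in>{0..s}. ennreal (power_weight \<alpha> x) \<partial>lborel) = ennreal (s powr (1-\<alpha>) / (1-\<alpha>))"
  using nn_integral_powr_Icc[of "-\<alpha>" 0 s] assms unfolding power_weight_def by simp

lemma avg_power_weight:
  assumes "\<alpha> < 1" "0 \<le> a" "a < b"
  shows "avg (power_weight \<alpha>) {a..b} = (b powr (1-\<alpha>) - a powr (1-\<alpha>)) / ((1-\<alpha>) * (b - a))"
  using set_integral_powr_Icc[of "-\<alpha>" a b] assms unfolding avg_def power_weight_def by simp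

lemma avg_inverse_power_weight:
  assumes "\<alpha> > -1" "0 \<le> a" "a < b"
  shows "avg (\<lambda>x. 1 / power_weight \<alpha> x) {a..b} = (b powr (1+\<alpha>) - a powr (1+\<alpha>)) / ((1+\<alpha>) * (b - a))"
  using set_integral_powr_Icc[of \<alpha> a b] assms unfolding avg_def inverse_power_weight
  by (simp add: add.commute)

lemma A2_cl_power_weight:
  assumes "\<bar>\<alpha>\<bar> < 1"
  shows "A2_cl (power_weight \<alpha>) = ereal (1 / ((1-\<alpha>) * (1+\<alpha>)))"
proof -
  have \<alpha>: "\<alpha> < 1" "\<alpha> > -1" using assms by auto
  let ?S = "{(a,b). 0 \<le> a \<and> a < b \<and> b \<le> (1::real)}"
  let ?g = "\<lambda>p. avg (power_weight \<alpha>) {fst p..snd p} * avg (\<lambda>x. 1 / power_weight \<alpha> x) {fst p..snd p}"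
  have le: "?g (a, b) \<le> 1 / ((1-\<alpha>) * (1+\<alpha>))" if "0 \<le> a" "a < b" for a b
  proof -
    have "?g (a, b) = ((b powr (1-\<alpha>) - a powr (1-\<alpha>)) * (b powr (1+\<alpha>) - a powr (1+\<alpha>)))
        / (((1-\<alpha>) * (1+\<alpha>)) * (b - a)\<^sup>2)"
      using avg_power_weight[OF \<alpha>(1) that] avg_inverse_power_weight[OF \<alpha>(2) that]
      by (simp add: power2_eq_square)
    also have "\<dots> \<le> (b - a)\<^sup>2 / (((1-\<alpha>) * (1+\<alpha>)) * (b - a)\<^sup>2)"
      using powr_conjugate_increments_le[of a b \<alpha>] \<alpha> that by (intro divide_right_mono) auto
    also have "\<dots> = 1 / ((1-\<alpha>) * (1+\<alpha>))" using that by simp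
    finally show ?thesis .
  qed
  have "?g (0, 1) = 1 / ((1-\<alpha>) * (1+\<alpha>))"
    using avg_power_weight[OF \<alpha>(1), of 0 1] avg_inverse_power_weight[OF \<alpha>(2), of 0 1] by simp
  then have "(SUP p\<in>?S. ereal (?g p)) = ereal (1 / ((1-\<alpha>) * (1+\<alpha>)))"
    using le by (intro antisym SUP_least SUP_upper2[of "(0, 1)"]) auto
  moreover have "set_integrable lborel {0..1} (\<lambda>x. 1 / power_weight \<alpha> x)"
    unfolding inverse_power_weight using set_integrable_powr_Icc[of \<alpha> 0 1] \<alpha> by simp
  ultimately show ?thesis unfolding A2_cl_def by simp
qed

section \<open>A geometric non-homogeneous dyadic filtration\<close>

lemma mdiff_two_children:
  assumes "children D n I = {J1, J2}" "J1 \<noteq> J2"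
  shows "mdiff D n I g x = avg g J1 * indicator J1 x + avg g J2 * indicator J2 x - avg g I * indicator I x"
proof -
  have "sum h {J1, J2} = h J1 + h J2" for h :: "real set \<Rightarrow> real"
    using assms(2) by simp
  then show ?thesis by (simp only: mdiff_def assms(1))
qed

definition split_point :: "real \<Rightarrow> real set \<Rightarrow> real" where
  "split_point \<rho> I = (if Inf I = 0 then \<rho> * Sup I else (Inf I + Sup I) / 2)"

primrec geom_filtration :: "real \<Rightarrow> nat \<Rightarrow> real set set" where
  "geom_filtration \<rho> 0 = {{0..1}}"
| "geom_filtration \<rho> (Suc n) =
    (\<Union>I\<in>geom_filtration \<rho> n. {{Inf I..split_point \<rho> I}, {split_point \<rho> I..Sup I}})"

locale geometric_filtration =
  fixes \<rho> :: real
  assumes rho_pos: "0 < \<rho>" and rho_less_1: "\<rho> < 1"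
begin

abbreviation "D \<equiv> geom_filtration \<rho>"

lemma rho_power_antimono: "m \<le> n \<Longrightarrow> \<rho>^n \<le> \<rho>^m"
  using rho_pos rho_less_1 by (simp add: power_decreasing)

lemma rho_power_strict_antimono: "m < n \<Longrightarrow> \<rho>^n < \<rho>^m"
  using rho_pos rho_less_1 by (simp add: power_strict_decreasing)

lemma rho_power_pos: "0 < \<rho>^n"
  using rho_pos by simp

lemma rho_power_le_1: "\<rho>^n \<le> 1"
  using rho_pos rho_less_1 by (simp add: power_le_one)

definition chain_or_layer :: "nat \<Rightarrow> real set \<Rightarrow> bool" where
  "chain_or_layer n I \<longleftrightarrow>
     I = {0..\<rho>^n} \<or> (\<exists>j<n. \<exists>a b. \<rho>^Suc j \<le> a \<and> a < b \<and> b \<le> \<rho>^j \<and> I = {a..b})"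

lemma chain_or_layerE:
  assumes "chain_or_layer n I"
  obtains a b where "I = {a..b}" "0 \<le> a" "a < split_point \<rho> I" "split_point \<rho> I < b" "b \<le> 1"
    "Inf I = a" "Sup I = b"
    "(a = 0 \<and> b = \<rho>^n \<and> split_point \<rho> I = \<rho>^Suc n)
     \<or> (\<exists>j<n. \<rho>^Suc j \<le> a \<and> b \<le> \<rho>^j \<and> split_point \<rho> I = (a + b) / 2)"
  using assms unfolding chain_or_layer_def
proof (elim disjE exE conjE)
  assume "I = {0..\<rho>^n}"
  moreover have "0 < \<rho>^Suc n" "\<rho>^Suc n < \<rho>^n"
    using rho_power_pos[of "Suc n"] rho_power_strict_antimono[of n "Suc n"] by auto
  ultimately show thesis
    using that[of 0 "\<rho>^n"] rho_power_le_1[of n] by (simp add: split_point_def)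
next
  fix j a b assume j: "j < n" "\<rho>^Suc j \<le> a" "a < b" "b \<le> \<rho>^j" and I: "I = {a..b}"
  have "0 < a" "b \<le> 1" using j rho_power_pos[of "Suc j"] rho_power_le_1[of j] by linarith+
  then show thesis
    using that[of a b] j I by (auto simp: split_point_def)
qed

lemma chain_or_layer_layer:
  "j < n \<Longrightarrow> \<rho>^Suc j \<le> a \<Longrightarrow> a < b \<Longrightarrow> b \<le> \<rho>^j \<Longrightarrow> chain_or_layer n {a..b}"
  unfolding chain_or_layer_def by blast

lemma chain_or_layer_generation: "I \<in> D n \<Longrightarrow> chain_or_layer n I"
proof (induction n arbitrary: I)
  case 0
  then show ?case by (simp add: chain_or_layer_def)
next
  case (Suc n)
  then obtain I0 where I0: "I0 \<in> D n"
    and I: "I = {Inf I0..split_point \<rho> I0} \<or> I = {split_point \<rho> I0..Sup I0}"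
    by auto
  obtain a b where ab: "Inf I0 = a" "Sup I0 = b" "a < split_point \<rho> I0" "split_point \<rho> I0 < b"
    and cases: "(a = 0 \<and> b = \<rho>^n \<and> split_point \<rho> I0 = \<rho>^Suc n)
      \<or> (\<exists>j<n. \<rho>^Suc j \<le> a \<and> b \<le> \<rho>^j \<and> split_point \<rho> I0 = (a + b) / 2)"
    by (rule chain_or_layerE[OF Suc.IH[OF I0]])
  from cases show ?case
  proof (elim disjE exE conjE)
    assume "a = 0" "b = \<rho>^n" "split_point \<rho> I0 = \<rho>^Suc n"
    then show ?thesis
      using I ab chain_or_layer_layer[of n "Suc n" "\<rho>^Suc n" "\<rho>^n"]
      by (auto simp: chain_or_layer_def)
  next
    fix j assume "j < n" "\<rho>^Suc j \<le> a" "b \<le> \<rho>^j" "split_point \<rho> I0 = (a + b) / 2"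
    then show ?thesis
      using I ab chain_or_layer_layer[of j "Suc n"] by auto
  qed
qed

lemma generationE:
  assumes "I \<in> D n"
  obtains a b where "I = {a..b}" "a < split_point \<rho> I" "split_point \<rho> I < b"
    "Inf I = a" "Sup I = b"
    "(a = 0 \<and> b = \<rho>^n \<and> split_point \<rho> I = \<rho>^Suc n)
     \<or> (\<exists>j<n. \<rho>^Suc j \<le> a \<and> b \<le> \<rho>^j \<and> split_point \<rho> I = (a + b) / 2)"
  by (rule chain_or_layerE[OF chain_or_layer_generation[OF assms]])

lemma finite_generation: "finite (D n)"
  by (induction n) auto

lemma chain_in_generation: "{0..\<rho>^n} \<in> D n"
proof (induction n)
  case (Suc n)
  have "split_point \<rho> {0..\<rho>^n} = \<rho>^Suc n"
    using rho_power_pos[of n] by (simp add: split_point_def)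
  then show ?case using Suc rho_power_pos[of n] by force
qed simp

lemma generation_separated:
  "I \<in> D n \<Longrightarrow> I' \<in> D n \<Longrightarrow> I \<noteq> I' \<Longrightarrow> Sup I \<le> Inf I' \<or> Sup I' \<le> Inf I"
proof (induction n arbitrary: I I')
  case (Suc n)
  from Suc.prems(1) obtain I0 where I0: "I0 \<in> D n"
    and I: "I = {Inf I0..split_point \<rho> I0} \<or> I = {split_point \<rho> I0..Sup I0}" by auto
  from Suc.prems(2) obtain I1 where I1: "I1 \<in> D n"
    and I': "I' = {Inf I1..split_point \<rho> I1} \<or> I' = {split_point \<rho> I1..Sup I1}" by auto
  obtain a b where ab: "I0 = {a..b}" "a < split_point \<rho> I0" "split_point \<rho> I0 < b" "Inf I0 = a" "Sup I0 = b"
    by (rule generationE[OF I0])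
  obtain a' b' where ab': "I1 = {a'..b'}" "a' < split_point \<rho> I1" "split_point \<rho> I1 < b'"
      "Inf I1 = a'" "Sup I1 = b'"
    by (rule generationE[OF I1])
  show ?case
  proof (cases "I0 = I1")
    case True
    then show ?thesis using I I' ab Suc.prems(3) by auto
  next
    case False
    then have "b \<le> a' \<or> b' \<le> a" using Suc.IH[OF I0 I1] ab ab' by auto
    then show ?thesis using I I' ab ab' by auto
  qed
qed simp

lemma children_generation:
  assumes I: "I \<in> D n"
  shows "children D n I = {{Inf I..split_point \<rho> I}, {split_point \<rho> I..Sup I}}"
proof
  have "{Inf I..split_point \<rho> I} \<in> D (Suc n)" "{split_point \<rho> I..Sup I} \<in> D (Suc n)"
    using I by auto
  moreover obtain a b where "I = {a..b}" "a < split_point \<rho> I" "split_point \<rho> I < b"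
      "Inf I = a" "Sup I = b"
    by (rule generationE[OF I])
  ultimately show "{{Inf I..split_point \<rho> I}, {split_point \<rho> I..Sup I}} \<subseteq> children D n I"
    unfolding children_def by auto
  show "children D n I \<subseteq> {{Inf I..split_point \<rho> I}, {split_point \<rho> I..Sup I}}"
  proof
    fix J assume "J \<in> children D n I"
    then have J: "J \<in> D (Suc n)" "J \<subseteq> I" unfolding children_def by auto
    then obtain I1 where I1: "I1 \<in> D n"
      and J1: "J = {Inf I1..split_point \<rho> I1} \<or> J = {split_point \<rho> I1..Sup I1}" by auto
    show "J \<in> {{Inf I..split_point \<rho> I}, {split_point \<rho> I..Sup I}}"
    proof (cases "I1 = I")
      case False
      obtain a b where ab: "I = {a..b}" "Inf I = a" "Sup I = b" by (rule generationE[OF I])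
      obtain a' b' where ab': "a' < split_point \<rho> I1" "split_point \<rho> I1 < b'" "Inf I1 = a'" "Sup I1 = b'"
        by (rule generationE[OF I1])
      obtain c d where cd: "J = {c..d}" "c < d" by (rule generationE[OF J(1)]) auto
      have "b \<le> a' \<or> b' \<le> a" using generation_separated[OF I I1] False ab ab' by auto
      moreover have "a' \<le> c" "d \<le> b'" using J1 ab' cd by auto
      ultimately show ?thesis using cd J(2) ab by auto
    qed (use J1 in auto)
  qed
qed

lemma nh_dyadic_filtration_geom: "nh_dyadic_filtration D"
  unfolding nh_dyadic_filtration_def
proof (intro conjI allI ballI)
  fix n J assume "J \<in> D (Suc n)"
  then obtain I where "I \<in> D n" and "J = {Inf I..split_point \<rho> I} \<or> J = {split_point \<rho> I..Sup I}"
    by auto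
  moreover obtain a b where "I = {a..b}" "a < split_point \<rho> I" "split_point \<rho> I < b"
      "Inf I = a" "Sup I = b"
    by (rule generationE[OF \<open>I \<in> D n\<close>])
  ultimately show "\<exists>I\<in>D n. J \<subseteq> I" by (intro bexI[of _ I]) auto
next
  fix n I assume I: "I \<in> D n"
  obtain a b where "I = {a..b}" "a < split_point \<rho> I" "split_point \<rho> I < b" "Inf I = a" "Sup I = b"
    by (rule generationE[OF I])
  then show "\<exists>a m b. a < m \<and> m < b \<and> I = {a..b} \<and> children D n I = {{a..m}, {m..b}}"
    using children_generation[OF I]
    by (intro exI[of _ a] exI[of _ "split_point \<rho> I"] exI[of _ b]) simp
qed simp

lemma Union_generation: "\<Union>(D n) = {0..1}"
proof (induction n)
  case (Suc n)
  have "\<Union>(D (Suc n)) = (\<Union>I\<in>D n. {Inf I..split_point \<rho> I} \<union> {split_point \<rho> I..Sup I})"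
    by auto
  also have "\<dots> = (\<Union>I\<in>D n. I)"
    by (rule SUP_cong[OF refl], erule generationE) auto
  also have "\<dots> = {0..1}" using Suc.IH by simp
  finally show ?case .
qed simp

definition endpoints :: "real set" where
  "endpoints = (\<Union>n. \<Union>I\<in>D n. {Inf I, Sup I})"

lemma AE_not_endpoint: "AE x in lborel. x \<notin> endpoints"
proof (rule AE_not_in, rule countable_imp_null_set_lborel)
  have "countable (\<Union>I\<in>D n. {Inf I, Sup I})" for n
    by (rule countable_finite) (simp add: finite_generation)
  then show "countable endpoints"
    unfolding endpoints_def by (rule countable_UN[rotated]) simp
qed

lemma endpoints_generation:
  assumes "I \<in> D n"
  shows "Inf I \<in> endpoints" "Sup I \<in> endpoints" "split_point \<rho> I \<in> endpoints"
proof -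
  show "Inf I \<in> endpoints" "Sup I \<in> endpoints"
    using assms unfolding endpoints_def by auto
  obtain a b where "I = {a..b}" "a < split_point \<rho> I" "Inf I = a"
    by (rule generationE[OF assms])
  moreover have "{Inf I..split_point \<rho> I} \<in> D (Suc n)" using assms by auto
  ultimately show "split_point \<rho> I \<in> endpoints"
    unfolding endpoints_def by (intro UN_I[of "Suc n"] UN_I[of "{Inf I..split_point \<rho> I}"]) auto
qed

lemma generation_interior:
  assumes "I \<in> D n" "x \<in> I" "x \<notin> endpoints"
  shows "Inf I < x" "x < Sup I"
proof -
  obtain a b where "I = {a..b}" "Inf I = a" "Sup I = b" by (rule generationE[OF assms(1)])
  then show "Inf I < x" "x < Sup I"
    using assms endpoints_generation[OF assms(1)] by (auto simp: less_le)
qed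

lemma generation_unique:
  assumes "I \<in> D n" "I' \<in> D n" "x \<in> I" "x \<in> I'" "x \<notin> endpoints"
  shows "I = I'"
  using generation_separated[OF assms(1,2)] generation_interior[OF assms(1,3,5)]
    generation_interior[OF assms(2,4,5)] by fastforce

lemma layer_of_point:
  assumes "x \<in> {0..1}" "x \<notin> endpoints"
  obtains k where "\<rho>^Suc k < x" "x < \<rho>^k"
proof -
  have chain_ends: "\<rho>^n \<in> endpoints" for n
    using endpoints_generation(2)[OF chain_in_generation[of n]] rho_power_pos[of n] by simp
  have "0 \<in> endpoints" using endpoints_generation(1)[of "{0..1}" 0] by simp
  then have "0 < x" using assms by (auto simp: less_le)
  then obtain n where "\<rho>^n < x" using real_arch_pow_inv rho_less_1 by blast
  moreover have "\<not> \<rho>^0 < x" using assms by simp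
  ultimately obtain k where "\<not> \<rho>^k < x" "\<rho>^Suc k < x"
    using ex_least_nat_less[of "\<lambda>n. \<rho>^n < x"] by auto
  moreover have "x \<noteq> \<rho>^k" using chain_ends assms(2) by auto
  ultimately show thesis using that by simp
qed

end

section \<open>The extremal function\<close>

lemma set_nn_integral_weight_le:
  fixes w :: "'a \<Rightarrow> real"
  assumes "w \<in> borel_measurable M" "S \<in> sets M" "AE x in M. x \<in> S \<longrightarrow> g x \<le> ennreal C"
  shows "(\<integral>\<^sup>+x\<in>S. g x * ennreal (w x) \<partial>M) \<le> ennreal C * (\<integral>\<^sup>+x\<in>S. ennreal (w x) \<partial>M)"
proof -
  have "(\<integral>\<^sup>+x\<in>S. g x * ennreal (w x) \<partial>M) \<le> (\<integral>\<^sup>+x\<in>S. ennreal C * ennreal (w x) \<partial>M)"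
    using assms(3) by (intro nn_integral_mono_AE)
      (auto elim!: eventually_mono intro: mult_right_mono split: split_indicator)
  also have "\<dots> = ennreal C * (\<integral>\<^sup>+x\<in>S. ennreal (w x) \<partial>M)"
    using assms(1,2) by (subst nn_integral_cmult[symmetric]) (auto simp: mult.assoc)
  finally show ?thesis .
qed

lemma set_integral_Icc_eq_const:
  fixes g :: "real \<Rightarrow> real"
  assumes "g \<in> borel_measurable borel" "a \<le> b" "\<And>x. a < x \<Longrightarrow> x \<le> b \<Longrightarrow> g x = c"
  shows "(LINT x:{a..b}|lborel. g x) = c * (b - a)"
proof -
  have "(LINT x:{a..b}|lborel. g x) = (LINT x:{a..b}|lborel. c)"
  proof (rule set_lebesgue_integral_cong_AE)
    show "AE x\<in>{a..b} in lborel. g x = c"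
      using AE_lborel_singleton[of a] by eventually_elim (use assms in auto)
  qed (use assms(1) in auto)
  then show ?thesis using assms(2) by (simp add: set_integral_const)
qed

lemma avg_Icc_eq_const:
  fixes g :: "real \<Rightarrow> real"
  assumes "g \<in> borel_measurable borel" "a < b" "\<And>x. a < x \<Longrightarrow> x \<le> b \<Longrightarrow> g x = c"
  shows "avg g {a..b} = c"
  using set_integral_Icc_eq_const[of g a b c] assms unfolding avg_def by simp

locale extremal_function = geometric_filtration +
  fixes K :: nat
  assumes K_pos: "0 < K"
begin

text \<open>The shift r = \<rho>/(1-\<rho>) in the definition of f makes its average over every chain
  interval [0,\<rho>^n] equal to min n K.\<close>
definition r :: real where
  "r = \<rho> / (1 - \<rho>)"

definition layer_value :: "nat \<Rightarrow> real" where
  "layer_value j = (if j < K then real j - r else real K)"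

definition f :: "real \<Rightarrow> real" where
  "f x = (if x \<le> \<rho>^K then real K
          else (\<Sum>i<K. if \<rho>^Suc i < x \<and> x \<le> \<rho>^i then real i - r else 0))"

lemma r_nonneg: "0 \<le> r"
  unfolding r_def using rho_pos rho_less_1 by simp

lemma f_measurable [measurable]: "f \<in> borel_measurable borel"
  unfolding f_def by measurable

lemma f_chain_bottom: "x \<le> \<rho>^K \<Longrightarrow> f x = real K"
  unfolding f_def by simp

lemma f_layer:
  assumes "\<rho>^Suc j < x" "x \<le> \<rho>^j"
  shows "f x = layer_value j"
proof (cases "j < K")
  case False
  then have "\<rho>^j \<le> \<rho>^K" using rho_power_antimono[of K j] by simp
  then show ?thesis using assms False f_chain_bottom unfolding layer_value_def by simp
next
  case True
  have "\<rho>^K \<le> \<rho>^Suc j" using True by (intro rho_power_antimono) simp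
  then have "\<not> x \<le> \<rho>^K" using assms by simp
  moreover have "(\<rho>^Suc i < x \<and> x \<le> \<rho>^i) \<longleftrightarrow> i = j" for i
  proof
    assume i: "\<rho>^Suc i < x \<and> x \<le> \<rho>^i"
    have "\<not> Suc i \<le> j" using i assms rho_power_antimono[of "Suc i" j] by linarith
    moreover have "\<not> Suc j \<le> i" using i assms rho_power_antimono[of "Suc j" i] by linarith
    ultimately show "i = j" by simp
  qed (use assms in simp)
  ultimately show ?thesis using True unfolding f_def layer_value_def by simp
qed

lemma abs_f_le: "\<bar>f x\<bar> \<le> real K + real K * (real K + r)"
proof -
  have "\<bar>\<Sum>i<K. if \<rho>^Suc i < x \<and> x \<le> \<rho>^i then real i - r else 0\<bar> \<le> (\<Sum>i<K. real K + r)"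
    using r_nonneg by (intro order_trans[OF sum_abs sum_mono]) auto
  then show ?thesis unfolding f_def by auto
qed

lemma set_integrable_f: "set_integrable lborel {a..b} f"
  unfolding set_integrable_def
  by (rule integrableI_bounded_set[where A="{a..b}" and B="real K + real K * (real K + r)"])
     (auto simp: abs_f_le emeasure_lborel_Icc_eq split: split_indicator)

lemma avg_f_layer:
  assumes "\<rho>^Suc j \<le> a" "a < b" "b \<le> \<rho>^j"
  shows "avg f {a..b} = layer_value j"
  by (rule avg_Icc_eq_const[OF f_measurable assms(2)]) (use assms in \<open>auto intro!: f_layer\<close>)

lemma set_integral_f_chain: "n \<le> K \<Longrightarrow> (LINT x:{0..\<rho>^n}|lborel. f x) = real n * \<rho>^n"
proof (induction n rule: inc_induct)
  case base
  show ?case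
    using set_integral_Icc_eq_const[of f 0 "\<rho>^K" "real K"] f_chain_bottom rho_power_pos[of K]
    by simp
next
  case (step n)
  have lt: "0 < \<rho>^Suc n" "\<rho>^Suc n < \<rho>^n"
    using rho_power_pos[of "Suc n"] rho_power_strict_antimono[of n "Suc n"] by auto
  then have "(LINT x:{0..\<rho>^n}|lborel. f x)
      = (LINT x:{0..\<rho>^Suc n}|lborel. f x) + (LINT x:{\<rho>^Suc n..\<rho>^n}|lborel. f x)"
    using AE_lborel_singleton[of "\<rho>^Suc n"] rho_less_1
    by (subst ivl_disj_un_two_touch(4)[symmetric, of 0 "\<rho>^Suc n" "\<rho>^n"])
       (auto intro!: set_integral_Un_AE set_integrable_f elim!: eventually_mono)
  also have "(LINT x:{\<rho>^Suc n..\<rho>^n}|lborel. f x) = (real n - r) * (\<rho>^n - \<rho>^Suc n)"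
    using lt step(2) f_layer[of n] rho_less_1
    by (intro set_integral_Icc_eq_const) (auto simp: layer_value_def)
  also have "(LINT x:{0..\<rho>^Suc n}|lborel. f x) = real (Suc n) * \<rho>^Suc n"
    using step by simp
  also have "real (Suc n) * \<rho>^Suc n + (real n - r) * (\<rho>^n - \<rho>^Suc n) = real n * \<rho>^n"
    using rho_pos rho_less_1 unfolding r_def by (simp add: field_simps)
  finally show ?case .
qed

lemma avg_f_chain: "avg f {0..\<rho>^n} = real (min n K)"
proof (cases "n \<le> K")
  case True
  then show ?thesis
    using set_integral_f_chain[OF True] rho_power_pos[of n] rho_pos unfolding avg_def by simp
next
  case False
  then have "\<rho>^n \<le> \<rho>^K" using rho_power_antimono[of K n] by simp
  then have "avg f {0..\<rho>^n} = real K"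
    using rho_power_pos[of n] by (intro avg_Icc_eq_const) (auto intro!: f_chain_bottom)
  then show ?thesis using False by simp
qed

lemma mdiff_off_chain:
  assumes I: "I \<in> D n" "I \<noteq> {0..\<rho>^n}" and x: "x \<notin> endpoints"
  shows "mdiff D n I f x = 0"
proof -
  define m where "m = split_point \<rho> I"
  obtain a b where ab: "I = {a..b}" "a < m" "m < b" "Inf I = a" "Sup I = b"
    and cases: "(a = 0 \<and> b = \<rho>^n \<and> m = \<rho>^Suc n)
      \<or> (\<exists>j<n. \<rho>^Suc j \<le> a \<and> b \<le> \<rho>^j \<and> m = (a + b) / 2)"
    unfolding m_def by (rule generationE[OF I(1)])
  obtain j where j: "\<rho>^Suc j \<le> a" "b \<le> \<rho>^j" using cases I(2) ab(1) by auto
  have "avg f {a..m} = layer_value j" "avg f {m..b} = layer_value j" "avg f {a..b} = layer_value j"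
    using ab j by (auto intro!: avg_f_layer)
  moreover have "children D n I = {{a..m}, {m..b}}"
    using children_generation[OF I(1)] ab unfolding m_def by simp
  then have "mdiff D n I f x = avg f {a..m} * indicator {a..m} x + avg f {m..b} * indicator {m..b} x
      - avg f {a..b} * indicator {a..b} x"
    using ab by (subst mdiff_two_children) auto
  moreover have "x \<noteq> m" using endpoints_generation(3)[OF I(1)] x unfolding m_def by auto
  ultimately show ?thesis
    using ab by (auto simp: indicator_def)
qed

lemma mdiff_chain:
  assumes x: "\<rho>^Suc k < x" "x < \<rho>^k"
  shows "mdiff D n {0..\<rho>^n} f x =
    (if n < k then (if n < K then 1 else 0) else if n = k then (if k < K then - r else 0) else 0)"
proof -
  have lt: "0 < \<rho>^Suc n" "\<rho>^Suc n < \<rho>^n"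
    using rho_power_pos[of "Suc n"] rho_power_strict_antimono[of n "Suc n"] by auto
  have "split_point \<rho> {0..\<rho>^n} = \<rho>^Suc n"
    using rho_power_pos[of n] by (simp add: split_point_def)
  then have "children D n {0..\<rho>^n} = {{0..\<rho>^Suc n}, {\<rho>^Suc n..\<rho>^n}}"
    using children_generation[OF chain_in_generation[of n]] rho_power_pos[of n] by simp
  moreover have "avg f {\<rho>^Suc n..\<rho>^n} = layer_value n"
    using lt by (intro avg_f_layer) auto
  ultimately have md: "mdiff D n {0..\<rho>^n} f x = real (min (Suc n) K) * indicator {0..\<rho>^Suc n} x
      + layer_value n * indicator {\<rho>^Suc n..\<rho>^n} x - real (min n K) * indicator {0..\<rho>^n} x"
    using lt avg_f_chain[of n] avg_f_chain[of "Suc n"] by (subst mdiff_two_children) auto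
  have "0 < x" using x rho_power_pos[of "Suc k"] by linarith
  consider "n < k" | "n = k" | "k < n" by linarith
  then show ?thesis
  proof cases
    case 1
    then have "\<rho>^k \<le> \<rho>^Suc n" by (intro rho_power_antimono) simp
    then show ?thesis using md 1 x \<open>0 < x\<close> lt by (auto simp: indicator_def)
  next
    case 2
    then show ?thesis using md x \<open>0 < x\<close> by (auto simp: indicator_def layer_value_def)
  next
    case 3
    then have "\<rho>^n \<le> \<rho>^Suc k" by (intro rho_power_antimono) simp
    then show ?thesis using md 3 x lt by (auto simp: indicator_def)
  qed
qed

lemma sum_sq_mdiff_eq_chain:
  assumes "x \<notin> endpoints"
  shows "(\<Sum>I\<in>D n. (mdiff D n I f x)\<^sup>2) = (mdiff D n {0..\<rho>^n} f x)\<^sup>2"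
  using mdiff_off_chain[OF _ _ assms]
  by (subst sum.remove[OF finite_generation chain_in_generation]) (auto intro!: sum.neutral)

lemma sqfun_sq_le:
  assumes x: "x \<in> {0..1}" "x \<notin> endpoints"
  shows "sqfun_sq D f x \<le> ennreal (real K + r\<^sup>2)"
proof -
  obtain k where k: "\<rho>^Suc k < x" "x < \<rho>^k" by (rule layer_of_point[OF x])
  define T where "T n = (mdiff D n {0..\<rho>^n} f x)\<^sup>2" for n
  have T: "T n = (if n < k then (if n < K then 1 else 0)
                  else if n = k then (if k < K then r\<^sup>2 else 0) else 0)" for n
    unfolding T_def mdiff_chain[OF k] by auto
  have "(\<Sum>n\<le>k. if n < K then 1 else 0 :: real) = (\<Sum>n\<in>{..k} \<inter> {n. n < K}. 1)"
    by (simp add: sum.If_cases)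
  also have "\<dots> \<le> (\<Sum>n\<in>{..<K}. 1)"
    by (intro sum_mono2) auto
  finally have count: "(\<Sum>n\<le>k. if n < K then 1 else 0 :: real) \<le> real K" by simp
  have "sqfun_sq D f x = (\<Sum>n. ennreal (T n))"
    unfolding sqfun_sq_def T_def sum_sq_mdiff_eq_chain[OF x(2)] ..
  also have "\<dots> = ennreal (\<Sum>n\<le>k. T n)"
    by (subst suminf_finite[of "{..k}"]) (auto simp: T sum_ennreal)
  also have "(\<Sum>n\<le>k. T n) \<le> (\<Sum>n\<le>k. (if n < K then 1 else 0) + (if n = k then r\<^sup>2 else 0))"
    by (rule sum_mono) (auto simp: T)
  also have "\<dots> \<le> real K + r\<^sup>2"
    using count by (simp add: sum.distrib)
  finally show ?thesis by (simp add: ennreal_leI)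
qed

lemma cond_exp_n_f_eq:
  assumes x: "x \<in> {0..1}" "x \<notin> endpoints" and k: "\<rho>^Suc k < x" "x < \<rho>^k" and n: "k < n"
  shows "cond_exp_n D n f x = f x"
proof -
  obtain I where I: "I \<in> D n" "x \<in> I" using x(1) Union_generation[of n] by blast
  obtain a b where ab: "I = {a..b}" "Inf I = a" "Sup I = b"
    and cases: "(a = 0 \<and> b = \<rho>^n \<and> split_point \<rho> I = \<rho>^Suc n)
      \<or> (\<exists>j<n. \<rho>^Suc j \<le> a \<and> b \<le> \<rho>^j \<and> split_point \<rho> I = (a + b) / 2)"
    by (rule generationE[OF I(1)])
  have "\<rho>^n \<le> \<rho>^Suc k" using n by (intro rho_power_antimono) simp
  then have "I \<noteq> {0..\<rho>^n}" using I k by auto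
  then obtain j where j: "\<rho>^Suc j \<le> a" "b \<le> \<rho>^j" using cases ab(1) by auto
  have axb: "a < x" "x < b" using generation_interior[OF I x(2)] ab by auto
  have "\<not> Suc j \<le> k" using rho_power_antimono[of "Suc j" k] j axb k by linarith
  moreover have "\<not> Suc k \<le> j" using rho_power_antimono[of "Suc k" j] j axb k by linarith
  ultimately have "j = k" by simp
  then have "avg f I = f x"
    using ab j axb k avg_f_layer[of k a b] f_layer[of k x] by simp
  moreover have "(\<Sum>J\<in>D n - {I}. avg f J * indicator J x) = 0"
    using generation_unique[OF _ I(1) _ I(2) x(2)] by (intro sum.neutral) (auto simp: indicator_def)
  ultimately show ?thesis
    using I unfolding cond_exp_n_def by (simp add: sum.remove[OF finite_generation I(1)])
qed

lemma cond_exp_n_f_tendsto: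
  "AE x in lborel. x \<in> {0..1} \<longrightarrow> (\<lambda>n. cond_exp_n D n f x) \<longlonglongrightarrow> f x"
  using AE_not_endpoint
proof eventually_elim
  case (elim x)
  show ?case
  proof
    assume x: "x \<in> {0..1}"
    obtain k where k: "\<rho>^Suc k < x" "x < \<rho>^k" by (rule layer_of_point[OF x elim])
    then have "eventually (\<lambda>n. cond_exp_n D n f x = f x) sequentially"
      using cond_exp_n_f_eq[OF x elim k] unfolding eventually_sequentially
      by (intro exI[of _ "Suc k"]) auto
    then show "(\<lambda>n. cond_exp_n D n f x) \<longlonglongrightarrow> f x" by (rule tendsto_eventually)
  qed
qed

lemma L2w_sq_power_weight_ge:
  assumes "\<alpha> < 1"
  shows "ennreal ((real K)\<^sup>2 * ((\<rho>^K) powr (1-\<alpha>) / (1-\<alpha>))) \<le> L2w_sq (power_weight \<alpha>) f"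
proof -
  have "ennreal ((real K)\<^sup>2 * ((\<rho>^K) powr (1-\<alpha>) / (1-\<alpha>)))
      = ennreal ((real K)\<^sup>2) * ennreal ((\<rho>^K) powr (1-\<alpha>) / (1-\<alpha>))"
    using assms by (intro ennreal_mult) auto
  also have "\<dots> = ennreal ((real K)\<^sup>2) * (\<integral>\<^sup>+x\<in>{0..\<rho>^K}. ennreal (power_weight \<alpha> x) \<partial>lborel)"
    using nn_integral_power_weight[OF assms, of "\<rho>^K"] rho_power_pos[of K] by simp
  also have "\<dots> = (\<integral>\<^sup>+x\<in>{0..\<rho>^K}. ennreal ((real K)\<^sup>2) * ennreal (power_weight \<alpha> x) \<partial>lborel)"
    by (subst nn_integral_cmult[symmetric]) (auto simp: mult.assoc)
  also have "\<dots> \<le> L2w_sq (power_weight \<alpha>) f"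
    unfolding L2w_sq_def
  proof (intro nn_integral_mono)
    fix x
    show "ennreal ((real K)\<^sup>2) * ennreal (power_weight \<alpha> x) * indicator {0..\<rho>^K} x
        \<le> ennreal ((f x)\<^sup>2 * power_weight \<alpha> x) * indicator {0..1} x"
      using rho_power_le_1[of K] f_chain_bottom[of x] power_weight_nonneg[of \<alpha> x]
      by (auto simp: ennreal_mult split: split_indicator)
  qed
  finally show ?thesis .
qed

lemma L2w_sq_power_weight_finite:
  assumes "\<alpha> < 1"
  shows "L2w_sq (power_weight \<alpha>) f < \<infinity>"
proof -
  define B where "B = real K + real K * (real K + r)"
  have "(f x)\<^sup>2 \<le> B\<^sup>2" for x
    using power_mono[OF abs_f_le[of x] abs_ge_zero, of 2] unfolding B_def by simp
  then have "L2w_sq (power_weight \<alpha>) f \<le> ennreal (B\<^sup>2) * (\<integral>\<^sup>+x\<in>{0..1}. ennreal (power_weight \<alpha> x) \<partial>lborel)"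
    unfolding L2w_sq_def using power_weight_nonneg[of \<alpha>]
    by (subst ennreal_mult'') (auto intro!: set_nn_integral_weight_le ennreal_leI)
  also have "\<dots> < \<infinity>"
    using nn_integral_power_weight[OF assms, of 1] by (simp add: ennreal_mult_less_top)
  finally show ?thesis .
qed

lemma Sf_L2w_sq_power_weight_le:
  assumes "\<alpha> < 1"
  shows "Sf_L2w_sq (power_weight \<alpha>) D f \<le> ennreal ((real K + r\<^sup>2) / (1-\<alpha>))"
proof -
  have "AE x in lborel. x \<in> {0..1} \<longrightarrow> sqfun_sq D f x \<le> ennreal (real K + r\<^sup>2)"
    using AE_not_endpoint by eventually_elim (use sqfun_sq_le in blast)
  then have "Sf_L2w_sq (power_weight \<alpha>) D f
      \<le> ennreal (real K + r\<^sup>2) * (\<integral>\<^sup>+x\<in>{0..1}. ennreal (power_weight \<alpha> x) \<partial>lborel)"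
    unfolding Sf_L2w_sq_def by (rule set_nn_integral_weight_le[rotated 2]) auto
  then show ?thesis
    using nn_integral_power_weight[OF assms, of 1] assms r_nonneg
    by (simp add: ennreal_mult[symmetric] del: ennreal_plus)
qed

lemma square_function_bound:
  assumes "\<alpha> < 1" and c: "c\<^sup>2 * (real K + r\<^sup>2) \<le> (real K)\<^sup>2 * (\<rho>^K) powr (1-\<alpha>)"
  shows "ennreal (c\<^sup>2) * Sf_L2w_sq (power_weight \<alpha>) D f \<le> L2w_sq (power_weight \<alpha>) f"
proof -
  have "ennreal (c\<^sup>2) * Sf_L2w_sq (power_weight \<alpha>) D f
      \<le> ennreal (c\<^sup>2) * ennreal ((real K + r\<^sup>2) / (1-\<alpha>))"
    using Sf_L2w_sq_power_weight_le[OF assms(1)] by (rule mult_left_mono) simp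
  also have "\<dots> = ennreal (c\<^sup>2 * (real K + r\<^sup>2) / (1-\<alpha>))"
    using assms(1) r_nonneg by (simp add: ennreal_mult[symmetric])
  also have "\<dots> \<le> ennreal ((real K)\<^sup>2 * ((\<rho>^K) powr (1-\<alpha>) / (1-\<alpha>)))"
    using c assms(1) by (intro ennreal_leI) (simp add: divide_right_mono)
  also have "\<dots> \<le> L2w_sq (power_weight \<alpha>) f"
    by (rule L2w_sq_power_weight_ge[OF assms(1)])
  finally show ?thesis .
qed

lemma L2w_sq_power_weight_pos:
  assumes "\<alpha> < 1"
  shows "0 < L2w_sq (power_weight \<alpha>) f"
proof -
  have "0 < (real K)\<^sup>2 * ((\<rho>^K) powr (1-\<alpha>) / (1-\<alpha>))"
    using K_pos rho_power_pos[of K] rho_pos assms by (intro mult_pos_pos divide_pos_pos) auto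
  then show ?thesis
    using L2w_sq_power_weight_ge[OF assms] by (metis ennreal_less_zero_iff order_less_le_trans)
qed

end

section \<open>Choice of parameters\<close>

lemma A2_characteristic_exponent:
  fixes A :: real
  assumes "1 \<le> A"
  obtains \<alpha> where "0 \<le> \<alpha>" "\<alpha> < 1" "1 / ((1-\<alpha>) * (1+\<alpha>)) = A"
proof
  let ?\<alpha> = "sqrt (1 - 1/A)"
  show "0 \<le> ?\<alpha>" using assms by simp
  show "?\<alpha> < 1" using assms real_sqrt_less_mono[of "1 - 1/A" 1] by simp
  have "(1 - ?\<alpha>) * (1 + ?\<alpha>) = 1 - ?\<alpha>\<^sup>2" by (simp add: power2_eq_square algebra_simps)
  also have "\<dots> = 1/A" using assms by simp
  finally show "1 / ((1 - ?\<alpha>) * (1 + ?\<alpha>)) = A" by simp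
qed

text \<open>Since ln (1 - \<beta>/2) \<ge> -\<beta>, the left-hand side is at least exp(-K\<beta>^2) \<ge> exp(-2).\<close>
lemma one_minus_half_power_powr_ge:
  fixes \<beta> :: real
  assumes \<beta>: "0 < \<beta>" "\<beta> \<le> 1" and K: "\<beta>\<^sup>2 * real K \<le> 2"
  shows "1/9 \<le> ((1 - \<beta>/2)^K) powr \<beta>"
proof -
  have "\<beta> * \<beta> \<le> \<beta>" "2 * (\<beta>/2)\<^sup>2 = \<beta> * \<beta> / 2"
    using \<beta> by (simp_all add: mult_le_cancel_left1 power2_eq_square)
  then have "-\<beta> \<le> - (\<beta>/2) - 2 * (\<beta>/2)\<^sup>2" by linarith
  also have "\<dots> \<le> ln (1 - \<beta>/2)"
    by (rule ln_one_minus_pos_lower_bound) (use \<beta> in auto)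
  finally have "\<beta> * (real K * -\<beta>) \<le> \<beta> * (real K * ln (1 - \<beta>/2))"
    using \<beta> by (intro mult_left_mono) auto
  moreover have "\<beta> * (real K * -\<beta>) = - (\<beta>\<^sup>2 * real K)" by (simp add: power2_eq_square)
  ultimately have exponent: "-2 \<le> \<beta> * (real K * ln (1 - \<beta>/2))" using K by linarith
  have "exp (2::real) = exp 1 * exp 1" by (simp add: exp_add[symmetric])
  also have "\<dots> \<le> 3 * 3" using exp_le by (intro mult_mono) auto
  finally have "1/9 \<le> exp (-2::real)"
    unfolding exp_minus inverse_eq_divide by (intro divide_left_mono) auto
  also have "\<dots> \<le> exp (\<beta> * (real K * ln (1 - \<beta>/2)))"
    using exponent by simp
  also have "\<dots> = ((1 - \<beta>/2)^K) powr \<beta>"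
    using \<beta> by (simp add: powr_def ln_realpow)
  finally show ?thesis .
qed

lemma extremal_parameters:
  fixes \<alpha> A :: real
  assumes \<alpha>: "0 \<le> \<alpha>" "\<alpha> < 1" and A: "0 \<le> A" "A \<le> 1/(1-\<alpha>)"
  defines "K \<equiv> nat \<lceil>1/(1-\<alpha>)\<^sup>2\<rceil>" and "\<rho> \<equiv> (1+\<alpha>)/2"
  shows "0 < K" and "(1/8 * A)\<^sup>2 * (real K + (\<rho>/(1-\<rho>))\<^sup>2) \<le> (real K)\<^sup>2 * (\<rho>^K) powr (1-\<alpha>)"
proof -
  define \<beta> where "\<beta> = 1 - \<alpha>"
  have \<beta>: "0 < \<beta>" "\<beta> \<le> 1" using \<alpha> unfolding \<beta>_def by auto
  have \<rho>: "\<rho> = 1 - \<beta>/2" unfolding \<rho>_def \<beta>_def by (simp add: field_simps)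
  have "1 \<le> 1/\<beta>\<^sup>2" using \<beta> by (simp add: power_le_one)
  then have K1: "1/\<beta>\<^sup>2 \<le> real K" and K2: "real K \<le> 2/\<beta>\<^sup>2"
    unfolding K_def \<beta>_def by linarith+
  then show "0 < K" using \<open>1 \<le> 1/\<beta>\<^sup>2\<close> by linarith
  have "\<beta>\<^sup>2 * real K \<le> 2" using K2 \<beta> by (simp add: field_simps)
  then have \<rho>K: "1/9 \<le> (\<rho>^K) powr \<beta>"
    unfolding \<rho> by (rule one_minus_half_power_powr_ge[OF \<beta>])
  have "\<rho>/(1-\<rho>) \<le> 2/\<beta>" "0 \<le> \<rho>/(1-\<rho>)" using \<beta> unfolding \<rho> by (auto simp: field_simps)
  then have "(\<rho>/(1-\<rho>))\<^sup>2 \<le> 4 * real K"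
    using K1 power_mono[of "\<rho>/(1-\<rho>)" "2/\<beta>" 2] by (simp add: power_divide)
  moreover have "A\<^sup>2 \<le> real K"
    using K1 power_mono[OF A(2) A(1), of 2] unfolding \<beta>_def by (simp add: power_divide)
  ultimately have "A\<^sup>2 * (real K + (\<rho>/(1-\<rho>))\<^sup>2) \<le> real K * (5 * real K)"
    by (intro mult_mono) auto
  then have "(1/8 * A)\<^sup>2 * (real K + (\<rho>/(1-\<rho>))\<^sup>2) \<le> 5/64 * (real K)\<^sup>2"
    by (simp add: power2_eq_square)
  also have "\<dots> \<le> (real K)\<^sup>2 * (1/9)"
    using mult_right_mono[of "5/64" "1/9" "(real K)\<^sup>2"] by simp
  also have "\<dots> \<le> (real K)\<^sup>2 * (\<rho>^K) powr (1-\<alpha>)"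
    using \<rho>K unfolding \<beta>_def by (intro mult_left_mono) auto
  finally show "(1/8 * A)\<^sup>2 * (real K + (\<rho>/(1-\<rho>))\<^sup>2) \<le> (real K)\<^sup>2 * (\<rho>^K) powr (1-\<alpha>)" .
qed

theorem theorem3p2:
  shows "\<exists>c::real. c > 0 \<and>
    (\<forall>A::real. A \<ge> 1 \<longrightarrow>
      (\<exists>w D f. is_weight w \<and> A2_cl w = ereal A \<and> nh_dyadic_filtration D \<and>
         f \<in> borel_measurable lborel \<and> L2w_sq w f < \<infinity> \<and>
         avg f {0..1} = 0 \<and>
         (AE x in lborel. x \<in> {0..1} \<longrightarrow> (\<lambda>n. cond_exp_n D n f x) \<longlonglongrightarrow> f x) \<and>
         L2w_sq w f > 0 \<and>
         ennreal ((c * A)\<^sup>2) * Sf_L2w_sq w D f \<le> L2w_sq w f))"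
proof (intro exI[of _ "1/8"] conjI allI impI)
  fix A :: real
  assume "1 \<le> A"
  then obtain \<alpha> where \<alpha>: "0 \<le> \<alpha>" "\<alpha> < 1" and A: "1 / ((1-\<alpha>) * (1+\<alpha>)) = A"
    by (rule A2_characteristic_exponent)
  have A_bounds: "0 \<le> A" "A \<le> 1/(1-\<alpha>)"
    unfolding A[symmetric] using \<alpha> by (auto intro!: divide_left_mono simp: mult_le_cancel_left1)
  define K where "K = nat \<lceil>1/(1-\<alpha>)\<^sup>2\<rceil>"
  define \<rho> where "\<rho> = (1+\<alpha>)/2"
  note parameters = extremal_parameters[OF \<alpha> A_bounds, folded K_def \<rho>_def]
  interpret extremal_function \<rho> K
    using \<alpha> parameters(1) by unfold_locales (auto simp: \<rho>_def)
  have "ennreal ((1/8 * A)\<^sup>2) * Sf_L2w_sq (power_weight \<alpha>) D f \<le> L2w_sq (power_weight \<alpha>) f"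
    using parameters(2) by (intro square_function_bound[OF \<alpha>(2)]) (simp add: r_def)
  then show "\<exists>w D f. is_weight w \<and> A2_cl w = ereal A \<and> nh_dyadic_filtration D \<and>
      f \<in> borel_measurable lborel \<and> L2w_sq w f < \<infinity> \<and> avg f {0..1} = 0 \<and>
      (AE x in lborel. x \<in> {0..1} \<longrightarrow> (\<lambda>n. cond_exp_n D n f x) \<longlonglongrightarrow> f x) \<and>
      L2w_sq w f > 0 \<and> ennreal ((1/8 * A)\<^sup>2) * Sf_L2w_sq w D f \<le> L2w_sq w f"
    using is_weight_power_weight[OF \<alpha>(2)] A2_cl_power_weight[of \<alpha>] \<alpha> A
      nh_dyadic_filtration_geom avg_f_chain[of 0] cond_exp_n_f_tendsto
      L2w_sq_power_weight_finite[OF \<alpha>(2)] L2w_sq_power_weight_pos[OF \<alpha>(2)]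
    by (intro exI[of _ "power_weight \<alpha>"] exI[of _ D] exI[of _ f]) auto
qed simp

end
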